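(* Let $X,X'$ be second countable locally compact Hausdorff spaces, $T'\colon X'\to X'$ a local homeomorphism, $T\colon X\to X$ a continuous locally injective map, and $\pi\colon X'\to X$ a proper continuous surjection with $\pi\circ T'=T\circ\pi$. Then the following are equivalent: (a) there exists $\mathscr X\subseteq X$ with $T^{-1}(\mathscr X)=\mathscr X$ such that $\mathscr X$ is co-meagre in $X$, $\pi^{-1}(\mathscr X)$ is co-meagre in $X'$, and $\pi$ restricts to a bijection $\pi^{-1}(\mathscr X)\to\mathscr X$; (b) the set $X'_0=\{x'\in X':|\pi^{-1}(\pi(x'))|=1\}$ is dense in $X'$.
   Context: A subset is co-meagre if its complement is meagre, i.e. a countable union of sets whose closures have empty interior. *)

theory Defs
  imports "HOL-Analysis.Analysis"
begin

definition nowhere_dense_in :: "'a topology \<Rightarrow> 'a set \<Rightarrow> bool" where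
  "nowhere_dense_in X S \<longleftrightarrow> S \<subseteq> topspace X \<and> X interior_of (X closure_of S) = {}"

definition meagre_in :: "'a topology \<Rightarrow> 'a set \<Rightarrow> bool" where
  "meagre_in X S \<longleftrightarrow> (\<exists>\<F>. countable \<F> \<and> (\<forall>N\<in>\<F>. nowhere_dense_in X N) \<and> S = \<Union>\<F>)"

definition comeagre_in :: "'a topology \<Rightarrow> 'a set \<Rightarrow> bool" where
  "comeagre_in X S \<longleftrightarrow> S \<subseteq> topspace X \<and> meagre_in X (topspace X - S)"

definition local_homeomorphism :: "'a topology \<Rightarrow> 'b topology \<Rightarrow> ('a \<Rightarrow> 'b) \<Rightarrow> bool" where
  "local_homeomorphism X Y f \<longleftrightarrow> continuous_map X Y f \<and>
     (\<forall>x\<in>topspace X. \<exists>U. openin X U \<and> x \<in> U \<and> openin Y (f ` U) \<and>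
        homeomorphic_map (subtopology X U) (subtopology Y (f ` U)) f)"

definition locally_injective :: "'a topology \<Rightarrow> ('a \<Rightarrow> 'b) \<Rightarrow> bool" where
  "locally_injective X f \<longleftrightarrow> (\<forall>x\<in>topspace X. \<exists>U. openin X U \<and> x \<in> U \<and> inj_on f U)"

end

theory Submission
  imports Defs
begin

text \<open>
  (a) \<Rightarrow> (b): by Baire's theorem the co-meagre set \<open>\<pi>\<^sup>-\<^sup>1(\<X>)\<close> is dense, and injectivity of
  \<open>\<pi>\<close> on this saturated set means that its points have singleton fibres.

  (b) \<Rightarrow> (a): density of the singleton-fibre points makes the closed surjection \<open>\<pi>\<close>
  quasi-open (nonempty open sets have images with nonempty interior), hence so is \<open>T\<close>,
  since \<open>T \<circ> \<pi> = \<pi> \<circ> T'\<close> with \<open>T'\<close> open. Continuous quasi-open maps pull meagre sets back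
  to meagre sets, and a continuous locally injective map on a second countable locally compact
  space pushes them forward, by compactness on small pieces. The points of \<open>X\<close> with several
  preimages form a meagre set: they are covered by the closed sets
  \<open>\<pi>(cl U) \<inter> \<pi>(X' - U)\<close>, \<open>U\<close> in a countable base, which have empty interior because singleton
  fibres are dense. So the grand orbit of this set under \<open>T\<close> is meagre and \<open>T\<close>-invariant, and
  its complement is the required set \<open>\<X>\<close>.
\<close>

section \<open>Meagre sets\<close>

lemma nowhere_dense_in_mono:
  assumes "nowhere_dense_in X N" "A \<subseteq> N"
  shows "nowhere_dense_in X A"
proof -
  have "X interior_of (X closure_of A) \<subseteq> X interior_of (X closure_of N)"
    by (intro interior_of_mono closure_of_mono assms(2))
  then show ?thesis using assms unfolding nowhere_dense_in_def by auto
qed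

lemma nowhere_dense_in_closedin:
  "closedin X N \<Longrightarrow> X interior_of N = {} \<Longrightarrow> nowhere_dense_in X N"
  unfolding nowhere_dense_in_def by (metis closure_of_closedin closedin_subset)

lemma nowhere_dense_imp_meagre_in: "nowhere_dense_in X N \<Longrightarrow> meagre_in X N"
  unfolding meagre_in_def by (intro exI[of _ "{N}"]) simp

lemma meagre_in_subset_topspace: "meagre_in X M \<Longrightarrow> M \<subseteq> topspace X"
  unfolding meagre_in_def nowhere_dense_in_def by blast

lemma meagre_in_mono:
  assumes "meagre_in X M" "A \<subseteq> M"
  shows "meagre_in X A"
proof -
  obtain \<F> where \<F>: "countable \<F>" "\<forall>N\<in>\<F>. nowhere_dense_in X N" "M = \<Union>\<F>"
    using assms(1) unfolding meagre_in_def by blast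
  show ?thesis
    unfolding meagre_in_def
  proof (intro exI conjI)
    show "countable ((\<lambda>N. N \<inter> A) ` \<F>)" using \<F>(1) by simp
    show "\<forall>N\<in>(\<lambda>N. N \<inter> A) ` \<F>. nowhere_dense_in X N"
      using \<F>(2) nowhere_dense_in_mono by blast
    show "A = \<Union>((\<lambda>N. N \<inter> A) ` \<F>)" using \<F>(3) assms(2) by blast
  qed
qed

lemma meagre_in_UN:
  assumes "countable I" "\<And>i. i \<in> I \<Longrightarrow> meagre_in X (A i)"
  shows "meagre_in X (\<Union>i\<in>I. A i)"
proof -
  have "\<forall>i\<in>I. \<exists>\<F>. countable \<F> \<and> (\<forall>N\<in>\<F>. nowhere_dense_in X N) \<and> A i = \<Union>\<F>"
    using assms(2) unfolding meagre_in_def by blast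
  then obtain \<F> where \<F>: "\<forall>i\<in>I. countable (\<F> i) \<and> (\<forall>N\<in>\<F> i. nowhere_dense_in X N) \<and> A i = \<Union>(\<F> i)"
    by (metis bchoice)
  show ?thesis
    unfolding meagre_in_def
  proof (intro exI conjI)
    show "countable (\<Union>i\<in>I. \<F> i)" using \<F> assms(1) by (simp add: countable_UN)
    show "\<forall>N\<in>(\<Union>i\<in>I. \<F> i). nowhere_dense_in X N" using \<F> by blast
    show "(\<Union>i\<in>I. A i) = \<Union>(\<Union>i\<in>I. \<F> i)" using \<F> by auto
  qed
qed

lemma meagre_in_closed_cover:
  assumes "countable \<C>" "\<And>C. C \<in> \<C> \<Longrightarrow> closedin X C \<and> X interior_of C = {}" "M \<subseteq> \<Union>\<C>"
  shows "meagre_in X M"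
proof -
  have "meagre_in X (\<Union>\<C>)"
    unfolding meagre_in_def
    using assms(1,2) nowhere_dense_in_closedin by (intro exI[of _ \<C>]) blast
  then show ?thesis using assms(3) by (rule meagre_in_mono)
qed

lemma comeagre_in_imp_dense:
  assumes "locally_compact_space X" "Hausdorff_space X" "comeagre_in X S"
  shows "X closure_of S = topspace X"
proof -
  obtain \<F> where \<F>: "countable \<F>" "\<forall>N\<in>\<F>. nowhere_dense_in X N" "topspace X - S = \<Union>\<F>"
    using assms(3) unfolding comeagre_in_def meagre_in_def by (elim conjE exE) blast
  have "X interior_of \<Union>((\<lambda>N. X closure_of N) ` \<F>) = {}"
  proof (rule Baire_category_alt)
    show "completely_metrizable_space X \<or> locally_compact_space X \<and> regular_space X"
      using assms(1,2) locally_compact_Hausdorff_imp_regular_space by blast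
    show "countable ((\<lambda>N. X closure_of N) ` \<F>)" using \<F>(1) by simp
    fix C assume "C \<in> (\<lambda>N. X closure_of N) ` \<F>"
    then obtain N where "N \<in> \<F>" "C = X closure_of N" by blast
    then show "closedin X C \<and> X interior_of C = {}"
      using \<F>(2) unfolding nowhere_dense_in_def by simp
  qed
  moreover have "topspace X - S \<subseteq> \<Union>((\<lambda>N. X closure_of N) ` \<F>)"
  proof
    fix x assume "x \<in> topspace X - S"
    then obtain N where N: "N \<in> \<F>" "x \<in> N" using \<F>(3) by blast
    then have "N \<subseteq> topspace X" using \<F>(2) unfolding nowhere_dense_in_def by blast
    then have "x \<in> X closure_of N" using N(2) closure_of_subset by blast
    then show "x \<in> \<Union>((\<lambda>N. X closure_of N) ` \<F>)" using N(1) by blast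
  qed
  ultimately have "X interior_of (topspace X - S) = {}"
    using interior_of_mono by blast
  then show ?thesis by (simp add: closure_of_eq_topspace)
qed

lemma dense_meets_open:
  assumes "X closure_of S = topspace X" "openin X T" "T \<noteq> {}"
  obtains x where "x \<in> T" "x \<in> S"
proof -
  have "T \<inter> X closure_of S = T" using assms(1) openin_subset[OF assms(2)] by blast
  then have "T \<inter> X closure_of S \<noteq> {}" using assms(3) by simp
  then have "T \<inter> S \<noteq> {}" using openin_Int_closure_of_eq_empty[OF assms(2)] by blast
  then show ?thesis using that by blast
qed

section \<open>Quasi-open maps\<close>

definition quasi_open_map :: "'a topology \<Rightarrow> 'b topology \<Rightarrow> ('a \<Rightarrow> 'b) \<Rightarrow> bool" where
  "quasi_open_map X Y f \<longleftrightarrow> (\<forall>U. openin X U \<and> U \<noteq> {} \<longrightarrow> Y interior_of (f ` U) \<noteq> {})"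

lemma nowhere_dense_in_preimage:
  assumes "continuous_map X Y f" "quasi_open_map X Y f" "nowhere_dense_in Y N"
  shows "nowhere_dense_in X {x \<in> topspace X. f x \<in> N}"
proof -
  define C where "C = Y closure_of N"
  have C: "closedin Y C" "Y interior_of C = {}" "N \<subseteq> C"
    using assms(3) unfolding C_def nowhere_dense_in_def by (auto simp: closure_of_subset)
  have "closedin X {x \<in> topspace X. f x \<in> C}"
    using closedin_continuous_map_preimage assms(1) C(1) by blast
  then have cl: "X closure_of {x \<in> topspace X. f x \<in> N} \<subseteq> {x \<in> topspace X. f x \<in> C}"
    using C(3) by (intro closure_of_minimal) auto
  define V where "V = X interior_of (X closure_of {x \<in> topspace X. f x \<in> N})"
  have "V = {}"
  proof (rule ccontr)
    assume "V \<noteq> {}"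
    then have "Y interior_of (f ` V) \<noteq> {}"
      using assms(2) unfolding quasi_open_map_def V_def by simp
    moreover have "f ` V \<subseteq> C" using cl interior_of_subset[of X] unfolding V_def by blast
    ultimately show False using C(2) interior_of_mono by blast
  qed
  then show ?thesis unfolding nowhere_dense_in_def V_def by auto
qed

lemma meagre_in_preimage:
  assumes "continuous_map X Y f" "quasi_open_map X Y f" "meagre_in Y M"
  shows "meagre_in X {x \<in> topspace X. f x \<in> M}"
proof -
  obtain \<F> where \<F>: "countable \<F>" "\<forall>N\<in>\<F>. nowhere_dense_in Y N" "M = \<Union>\<F>"
    using assms(3) unfolding meagre_in_def by blast
  have "{x \<in> topspace X. f x \<in> M} = (\<Union>N\<in>\<F>. {x \<in> topspace X. f x \<in> N})"
    using \<F>(3) by auto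
  moreover have "meagre_in X (\<Union>N\<in>\<F>. {x \<in> topspace X. f x \<in> N})"
    using \<F>(1,2) nowhere_dense_in_preimage[OF assms(1,2)] nowhere_dense_imp_meagre_in
    by (intro meagre_in_UN) auto
  ultimately show ?thesis by simp
qed

lemma quasi_open_map_compose:
  assumes "open_map X Y f" "quasi_open_map Y Z g"
  shows "quasi_open_map X Z (g \<circ> f)"
  unfolding quasi_open_map_def
proof (intro allI impI)
  fix U assume "openin X U \<and> U \<noteq> {}"
  then have "openin Y (f ` U) \<and> f ` U \<noteq> {}" using assms(1) unfolding open_map_def by blast
  then have "Z interior_of (g ` f ` U) \<noteq> {}"
    using assms(2) unfolding quasi_open_map_def by blast
  then show "Z interior_of ((g \<circ> f) ` U) \<noteq> {}" by (simp add: image_comp)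
qed

lemma quasi_open_map_eq:
  assumes "quasi_open_map X Y f" "\<And>x. x \<in> topspace X \<Longrightarrow> f x = g x"
  shows "quasi_open_map X Y g"
  unfolding quasi_open_map_def
proof (intro allI impI)
  fix U assume U: "openin X U \<and> U \<noteq> {}"
  then have "g ` U = f ` U" using assms(2) openin_subset by (metis image_cong subsetD)
  then show "Y interior_of (g ` U) \<noteq> {}" using U assms(1) unfolding quasi_open_map_def by simp
qed

lemma quasi_open_map_from_composition_left:
  assumes "quasi_open_map X Z (g \<circ> f)" "continuous_map X Y f" "f ` topspace X = topspace Y"
  shows "quasi_open_map Y Z g"
  unfolding quasi_open_map_def
proof (intro allI impI)
  fix V assume V: "openin Y V \<and> V \<noteq> {}"
  define P where "P = {x \<in> topspace X. f x \<in> V}"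
  have "openin X P" unfolding P_def using V assms(2) openin_continuous_map_preimage by blast
  moreover have "P \<noteq> {}"
  proof -
    obtain y where "y \<in> V" using V by blast
    then have "y \<in> f ` topspace X" using V openin_subset assms(3) by blast
    then show ?thesis using \<open>y \<in> V\<close> unfolding P_def by blast
  qed
  ultimately have "Z interior_of ((g \<circ> f) ` P) \<noteq> {}"
    using assms(1) unfolding quasi_open_map_def by blast
  moreover have "(g \<circ> f) ` P \<subseteq> g ` V" unfolding P_def by auto
  ultimately show "Z interior_of (g ` V) \<noteq> {}" using interior_of_mono by blast
qed

lemma local_homeomorphism_imp_open_map:
  assumes "local_homeomorphism X Y f"
  shows "open_map X Y f"
  unfolding open_map_def
proof (intro allI impI)
  fix W assume W: "openin X W"
  obtain U where U: "\<And>x. x \<in> topspace X \<Longrightarrow> openin X (U x) \<and> x \<in> U x \<and> openin Y (f ` U x) \<and>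
      homeomorphic_map (subtopology X (U x)) (subtopology Y (f ` U x)) f"
    using assms unfolding local_homeomorphism_def by metis
  have "openin Y (f ` (W \<inter> U x))" if x: "x \<in> W" for x
  proof -
    have "x \<in> topspace X" using W x openin_subset by blast
    have "openin (subtopology X (U x)) (W \<inter> U x)"
      using W by (rule openin_subtopology_Int)
    then have "openin (subtopology Y (f ` U x)) (f ` (W \<inter> U x))"
      using U \<open>x \<in> topspace X\<close> homeomorphic_imp_open_map unfolding open_map_def by blast
    then show ?thesis using U \<open>x \<in> topspace X\<close> openin_trans_full by blast
  qed
  moreover have "f ` W = (\<Union>x\<in>W. f ` (W \<inter> U x))"
    using U W openin_subset by fastforce
  ultimately show "openin Y (f ` W)" by auto
qed

lemma quasi_open_map_semiconjugate:
  assumes "local_homeomorphism X' X' T'" "quasi_open_map X' X \<pi>"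
    and "continuous_map X' X \<pi>" "\<pi> ` topspace X' = topspace X"
    and "\<And>x'. x' \<in> topspace X' \<Longrightarrow> \<pi> (T' x') = T (\<pi> x')"
  shows "quasi_open_map X X T"
proof -
  have "quasi_open_map X' X (\<pi> \<circ> T')"
    using quasi_open_map_compose[OF local_homeomorphism_imp_open_map[OF assms(1)] assms(2)] .
  then have "quasi_open_map X' X (T \<circ> \<pi>)"
    by (rule quasi_open_map_eq) (simp add: assms(5))
  then show ?thesis using quasi_open_map_from_composition_left assms(3,4) by blast
qed

section \<open>Images under locally injective maps\<close>

lemma interior_of_image_Int_image_inj_on:
  assumes "continuous_map X Y f" "X interior_of C = {}" "openin X V" "V \<subseteq> K" "inj_on f K"
  shows "Y interior_of (f ` (C \<inter> K)) \<inter> f ` V = {}"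
proof (rule ccontr)
  define W where "W = Y interior_of (f ` (C \<inter> K))"
  assume "Y interior_of (f ` (C \<inter> K)) \<inter> f ` V \<noteq> {}"
  then obtain v where v: "v \<in> V" "f v \<in> W" unfolding W_def by blast
  have Wo: "openin Y W" unfolding W_def by simp
  define P where "P = {x \<in> topspace X. f x \<in> W} \<inter> V"
  have "openin X P"
    unfolding P_def using openin_continuous_map_preimage[OF assms(1) Wo] assms(3) by blast
  moreover have "v \<in> P" unfolding P_def using v assms(3) openin_subset by blast
  ultimately have "\<not> P \<subseteq> C" using assms(2) interior_of_eq_empty by blast
  then obtain z where z: "z \<in> P" "z \<notin> C" by blast
  then have "f z \<in> f ` (C \<inter> K)" using interior_of_subset[of Y "f ` (C \<inter> K)"] unfolding P_def W_def by blast
  then obtain c where c: "c \<in> C" "c \<in> K" "f z = f c" by blast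
  have "z \<in> K" using z assms(4) unfolding P_def by blast
  then have "z = c" using assms(5) c inj_on_def by metis
  then show False using z c by blast
qed

lemma nowhere_dense_in_image_inj_on:
  assumes "Hausdorff_space Y" "continuous_map X Y f" "nowhere_dense_in X N"
    and "openin X V" "V \<subseteq> K" "compactin X K" "inj_on f K"
  shows "nowhere_dense_in Y (f ` (N \<inter> V))"
proof -
  have Ntop: "N \<subseteq> topspace X" using assms(3) unfolding nowhere_dense_in_def by blast
  define C where "C = X closure_of N"
  have C: "closedin X C" "X interior_of C = {}" "N \<subseteq> C"
    using assms(3) unfolding C_def nowhere_dense_in_def by (auto simp: closure_of_subset)
  have "compactin Y (f ` (C \<inter> K))"
    using image_compactin[OF closed_Int_compactin[OF C(1) assms(6)] assms(2)] .
  then have "closedin Y (f ` (C \<inter> K))" using compactin_imp_closedin assms(1) by blast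
  moreover have "f ` (N \<inter> V) \<subseteq> f ` (C \<inter> K)" using C(3) assms(5) by blast
  ultimately have "Y closure_of (f ` (N \<inter> V)) \<subseteq> f ` (C \<inter> K)"
    using closure_of_minimal by blast
  then have "Y interior_of (Y closure_of (f ` (N \<inter> V))) \<inter> f ` V = {}"
    using interior_of_image_Int_image_inj_on[OF assms(2) C(2) assms(4,5,7)] interior_of_mono
    by blast
  then have "Y interior_of (Y closure_of (f ` (N \<inter> V))) \<inter> f ` (N \<inter> V) = {}" by blast
  then have "Y interior_of (Y closure_of (f ` (N \<inter> V))) = {}"
    by (metis interior_of_subset openin_Int_closure_of_eq_empty openin_interior_of
        inf.absorb_iff2 inf_commute)
  moreover have "f ` (N \<inter> V) \<subseteq> topspace Y"
    using Ntop continuous_map_image_subset_topspace[OF assms(2)] by blast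
  ultimately show ?thesis unfolding nowhere_dense_in_def by blast
qed

lemma locally_injective_countable_cover:
  assumes "second_countable X" "locally_compact_space X" "Hausdorff_space X"
    and "locally_injective X f"
  obtains \<B> where "countable \<B>" "topspace X \<subseteq> \<Union>\<B>"
    "\<And>V. V \<in> \<B> \<Longrightarrow> openin X V \<and> (\<exists>K. V \<subseteq> K \<and> compactin X K \<and> inj_on f K)"
proof -
  obtain \<B> where \<B>: "countable \<B>" "\<forall>V\<in>\<B>. openin X V"
    "\<And>U x. openin X U \<Longrightarrow> x \<in> U \<Longrightarrow> \<exists>V\<in>\<B>. x \<in> V \<and> V \<subseteq> U"
    using assms(1) unfolding second_countable_def by metis
  define \<B>' where "\<B>' = {V \<in> \<B>. \<exists>K. V \<subseteq> K \<and> compactin X K \<and> inj_on f K}"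
  have nb: "neighbourhood_base_of (compactin X) X"
    using assms(2,3) locally_compact_space_neighbourhood_base by blast
  have "topspace X \<subseteq> \<Union>\<B>'"
  proof
    fix x assume "x \<in> topspace X"
    then obtain U where U: "openin X U" "x \<in> U" "inj_on f U"
      using assms(4) unfolding locally_injective_def by blast
    then obtain V K where VK: "openin X V" "compactin X K" "x \<in> V" "V \<subseteq> K" "K \<subseteq> U"
      using nb unfolding neighbourhood_base_of by metis
    then obtain B where B: "B \<in> \<B>" "x \<in> B" "B \<subseteq> V" using \<B>(3) by metis
    have "inj_on f K" using inj_on_subset[OF U(3) VK(5)] .
    then have "B \<in> \<B>'" unfolding \<B>'_def using B VK by blast
    then show "x \<in> \<Union>\<B>'" using B(2) by blast
  qed
  moreover have "countable \<B>'" unfolding \<B>'_def using \<B>(1) by simp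
  ultimately show ?thesis using that \<B>(2) unfolding \<B>'_def by blast
qed

lemma meagre_in_image_of_nowhere_dense:
  assumes "second_countable X" "locally_compact_space X" "Hausdorff_space X" "Hausdorff_space Y"
    and "continuous_map X Y f" "locally_injective X f" "nowhere_dense_in X N"
  shows "meagre_in Y (f ` N)"
proof -
  obtain \<B> where \<B>: "countable \<B>" "topspace X \<subseteq> \<Union>\<B>"
    "\<And>V. V \<in> \<B> \<Longrightarrow> openin X V \<and> (\<exists>K. V \<subseteq> K \<and> compactin X K \<and> inj_on f K)"
    using locally_injective_countable_cover[OF assms(1-3,6)] by blast
  have "N \<subseteq> topspace X" using assms(7) unfolding nowhere_dense_in_def by blast
  then have "f ` N = (\<Union>V\<in>\<B>. f ` (N \<inter> V))" using \<B>(2) by blast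
  moreover have "meagre_in Y (\<Union>V\<in>\<B>. f ` (N \<inter> V))"
  proof (rule meagre_in_UN[OF \<B>(1)])
    fix V assume "V \<in> \<B>"
    then obtain K where "openin X V" "V \<subseteq> K" "compactin X K" "inj_on f K" using \<B>(3) by blast
    then have "nowhere_dense_in Y (f ` (N \<inter> V))"
      using nowhere_dense_in_image_inj_on[OF assms(4,5,7)] by blast
    then show "meagre_in Y (f ` (N \<inter> V))" by (rule nowhere_dense_imp_meagre_in)
  qed
  ultimately show ?thesis by simp
qed

lemma meagre_in_image:
  assumes "second_countable X" "locally_compact_space X" "Hausdorff_space X" "Hausdorff_space Y"
    and "continuous_map X Y f" "locally_injective X f" "meagre_in X M"
  shows "meagre_in Y (f ` M)"
proof -
  obtain \<F> where \<F>: "countable \<F>" "\<forall>N\<in>\<F>. nowhere_dense_in X N" "M = \<Union>\<F>"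
    using assms(7) unfolding meagre_in_def by blast
  have "f ` M = (\<Union>N\<in>\<F>. f ` N)" using \<F>(3) by blast
  moreover have "meagre_in Y (\<Union>N\<in>\<F>. f ` N)"
    using \<F>(1,2) meagre_in_image_of_nowhere_dense[OF assms(1-6)] by (intro meagre_in_UN) auto
  ultimately show ?thesis by simp
qed

section \<open>Points with a singleton fibre\<close>

definition injectivity_points :: "'a topology \<Rightarrow> ('a \<Rightarrow> 'b) \<Rightarrow> 'a set" where
  "injectivity_points X f = {x \<in> topspace X. \<forall>y \<in> topspace X. f y = f x \<longrightarrow> y = x}"

lemma injectivity_points_eq_card_fibre:
  "injectivity_points X f = {x \<in> topspace X. card {y \<in> topspace X. f y = f x} = 1}"
proof (intro set_eqI iffI)
  fix x assume "x \<in> injectivity_points X f"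
  then have "x \<in> topspace X" "{y \<in> topspace X. f y = f x} = {x}"
    unfolding injectivity_points_def by blast+
  then show "x \<in> {x \<in> topspace X. card {y \<in> topspace X. f y = f x} = 1}" by simp
next
  fix x assume x: "x \<in> {x \<in> topspace X. card {y \<in> topspace X. f y = f x} = 1}"
  then have "card {y \<in> topspace X. f y = f x} = 1" by simp
  then obtain z where z: "{y \<in> topspace X. f y = f x} = {z}" by (rule card_1_singletonE)
  moreover have "x \<in> {y \<in> topspace X. f y = f x}" using x by simp
  ultimately have "{y \<in> topspace X. f y = f x} = {x}" by (metis singletonD)
  then show "x \<in> injectivity_points X f" unfolding injectivity_points_def by blast
qed

lemma closed_map_imp_quasi_open_map:
  assumes "closed_map X Y f" "f ` topspace X = topspace Y"
    and "X closure_of injectivity_points X f = topspace X"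
  shows "quasi_open_map X Y f"
  unfolding quasi_open_map_def
proof (intro allI impI)
  fix U assume U: "openin X U \<and> U \<noteq> {}"
  then obtain x where x: "x \<in> U" "x \<in> injectivity_points X f"
    using assms(3) unfolding dense_intersects_open by blast
  define K where "K = f ` (topspace X - U)"
  have "closedin X (topspace X - U)" using U by blast
  then have "closedin Y K" unfolding K_def using assms(1) closed_map_def by blast
  then have "openin Y (topspace Y - K)" by blast
  moreover have "f x \<notin> K"
  proof
    assume "f x \<in> K"
    then obtain y where "y \<in> topspace X - U" "f y = f x" unfolding K_def by auto
    then show False using x unfolding injectivity_points_def by blast
  qed
  then have "f x \<in> topspace Y - K"
    using x assms(2) unfolding injectivity_points_def by blast
  moreover have "topspace Y - K \<subseteq> f ` U" using assms(2) unfolding K_def by blast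
  ultimately show "Y interior_of (f ` U) \<noteq> {}" using interior_of_maximal by blast
qed

lemma interior_of_image_closure_Int_image_compl:
  assumes "continuous_map X Y f" "X closure_of injectivity_points X f = topspace X" "openin X U"
  shows "Y interior_of (f ` (X closure_of U) \<inter> f ` (topspace X - U)) = {}"
proof (rule ccontr)
  define W where "W = Y interior_of (f ` (X closure_of U) \<inter> f ` (topspace X - U))"
  assume "Y interior_of (f ` (X closure_of U) \<inter> f ` (topspace X - U)) \<noteq> {}"
  then obtain w where w: "w \<in> W" unfolding W_def by blast
  have WC: "W \<subseteq> f ` (X closure_of U) \<inter> f ` (topspace X - U)"
    unfolding W_def by (rule interior_of_subset)
  define P where "P = {x \<in> topspace X. f x \<in> W}"
  have P: "openin X P"
    unfolding P_def W_def using openin_continuous_map_preimage[OF assms(1)] by simp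
  have "w \<in> f ` (topspace X - U)" using w WC by blast
  then obtain y where y: "y \<in> topspace X - U" "w = f y" by (rule imageE)
  then have "y \<in> P" using w unfolding P_def by simp
  then have "P \<noteq> {}" by blast
  then obtain x1 where x1: "x1 \<in> P" "x1 \<in> injectivity_points X f"
    using dense_meets_open[OF assms(2) P] by blast
  then have "f x1 \<in> f ` (X closure_of U)" using WC unfolding P_def by blast
  then obtain a where a: "a \<in> X closure_of U" "f x1 = f a" by (rule imageE)
  moreover have "a \<in> topspace X" using closure_of_subset_topspace[of X U] a(1) by blast
  ultimately have "a = x1" using x1(2) unfolding injectivity_points_def by simp
  then have "P \<inter> U \<noteq> {}" using openin_Int_closure_of_eq_empty[OF P] a(1) x1(1) by blast
  moreover have "openin X (P \<inter> U)" using P assms(3) by (rule openin_Int)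
  ultimately obtain x2 where x2: "x2 \<in> P \<inter> U" "x2 \<in> injectivity_points X f"
    using dense_meets_open[OF assms(2)] by metis
  then have "f x2 \<in> f ` (topspace X - U)" using WC unfolding P_def by blast
  then obtain b where b: "b \<in> topspace X - U" "f x2 = f b" by (rule imageE)
  then have "b = x2" using x2(2) unfolding injectivity_points_def by simp
  then show False using b(1) x2(1) by blast
qed

lemma image_non_injectivity_points_subset:
  assumes "Hausdorff_space X" "\<forall>V\<in>\<B>. openin X V"
    and "\<And>U x. openin X U \<Longrightarrow> x \<in> U \<Longrightarrow> \<exists>V\<in>\<B>. x \<in> V \<and> V \<subseteq> U"
  shows "f ` (topspace X - injectivity_points X f)
           \<subseteq> (\<Union>U\<in>\<B>. f ` (X closure_of U) \<inter> f ` (topspace X - U))"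
proof
  fix w assume "w \<in> f ` (topspace X - injectivity_points X f)"
  then obtain x where x: "x \<in> topspace X - injectivity_points X f" "w = f x" by (rule imageE)
  then obtain y where y: "y \<in> topspace X" "y \<noteq> x" "f y = f x"
    unfolding injectivity_points_def by blast
  obtain O1 O2 where O: "openin X O1" "openin X O2" "x \<in> O1" "y \<in> O2" "disjnt O1 O2"
    using assms(1) x(1) y(1,2) unfolding Hausdorff_space_def by blast
  obtain U where U: "U \<in> \<B>" "x \<in> U" "U \<subseteq> O1" using assms(3)[OF O(1,3)] by blast
  have "y \<notin> U" using U(3) O(4,5) unfolding disjnt_def by blast
  have "U \<subseteq> topspace X" using assms(2) U(1) openin_subset by blast
  then have "x \<in> X closure_of U" using U(2) closure_of_subset by blast
  then have "f x \<in> f ` (X closure_of U)" by (rule imageI)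
  moreover have "f y \<in> f ` (topspace X - U)" using y(1) \<open>y \<notin> U\<close> by simp
  ultimately show "w \<in> (\<Union>U\<in>\<B>. f ` (X closure_of U) \<inter> f ` (topspace X - U))"
    using U(1) x(2) y(3) by auto
qed

lemma meagre_in_image_of_non_injectivity_points:
  assumes "second_countable X" "Hausdorff_space X" "continuous_map X Y f" "closed_map X Y f"
    and "X closure_of injectivity_points X f = topspace X"
  shows "meagre_in Y (f ` (topspace X - injectivity_points X f))"
proof -
  obtain \<B> where \<B>: "countable \<B>" "\<forall>V\<in>\<B>. openin X V"
    "\<And>U x. openin X U \<Longrightarrow> x \<in> U \<Longrightarrow> \<exists>V\<in>\<B>. x \<in> V \<and> V \<subseteq> U"
    using assms(1) unfolding second_countable_def by metis
  show ?thesis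
  proof (rule meagre_in_closed_cover)
    show "countable ((\<lambda>U. f ` (X closure_of U) \<inter> f ` (topspace X - U)) ` \<B>)"
      using \<B>(1) by simp
    fix C assume "C \<in> (\<lambda>U. f ` (X closure_of U) \<inter> f ` (topspace X - U)) ` \<B>"
    then obtain U where U: "openin X U" "C = f ` (X closure_of U) \<inter> f ` (topspace X - U)"
      using \<B>(2) by blast
    have "closedin Y (f ` (X closure_of U))"
      using assms(4) closedin_closure_of unfolding closed_map_def by blast
    moreover have "closedin X (topspace X - U)" using U(1) by blast
    then have "closedin Y (f ` (topspace X - U))"
      using assms(4) unfolding closed_map_def by blast
    ultimately have "closedin Y C" unfolding U(2) by (rule closedin_Int)
    then show "closedin Y C \<and> Y interior_of C = {}"
      using interior_of_image_closure_Int_image_compl[OF assms(3,5) U(1)] unfolding U(2) by blast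
  qed (rule image_non_injectivity_points_subset[OF assms(2) \<B>(2,3)])
qed

lemma dense_injectivity_points_if_comeagre_inj_on:
  assumes "locally_compact_space X" "Hausdorff_space X"
    and "comeagre_in X {x \<in> topspace X. f x \<in> S}" "inj_on f {x \<in> topspace X. f x \<in> S}"
  shows "X closure_of injectivity_points X f = topspace X"
proof -
  have "{x \<in> topspace X. f x \<in> S} \<subseteq> injectivity_points X f"
  proof
    fix x assume x: "x \<in> {x \<in> topspace X. f x \<in> S}"
    have "y = x" if "y \<in> topspace X" "f y = f x" for y
      using inj_onD[OF assms(4)] that x by simp
    then show "x \<in> injectivity_points X f" using x unfolding injectivity_points_def by blast
  qed
  then have "topspace X \<subseteq> X closure_of injectivity_points X f"
    using comeagre_in_imp_dense[OF assms(1-3)] closure_of_mono by metis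
  then show ?thesis using closure_of_subset_topspace[of X "injectivity_points X f"] by blast
qed

lemma bij_betw_preimage_if_disjoint_non_injectivity:
  assumes "f ` topspace X = topspace Y" "S \<subseteq> topspace Y"
    and "S \<inter> f ` (topspace X - injectivity_points X f) = {}"
  shows "bij_betw f {x \<in> topspace X. f x \<in> S} S"
  unfolding bij_betw_def
proof
  show "inj_on f {x \<in> topspace X. f x \<in> S}"
  proof (rule inj_onI)
    fix x y assume x: "x \<in> {x \<in> topspace X. f x \<in> S}" and y: "y \<in> {x \<in> topspace X. f x \<in> S}"
      and "f x = f y"
    have "x \<in> injectivity_points X f"
    proof (rule ccontr)
      assume "x \<notin> injectivity_points X f"
      then have "f x \<in> f ` (topspace X - injectivity_points X f)" using x by blast
      then show False using x assms(3) by blast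
    qed
    then have "\<forall>z\<in>topspace X. f z = f x \<longrightarrow> z = x" unfolding injectivity_points_def by blast
    then show "x = y" using y \<open>f x = f y\<close> by auto
  qed
  show "f ` {x \<in> topspace X. f x \<in> S} = S"
  proof
    show "S \<subseteq> f ` {x \<in> topspace X. f x \<in> S}"
    proof
      fix s assume "s \<in> S"
      then obtain x where "x \<in> topspace X" "s = f x" using assms(1,2) by blast
      then show "s \<in> f ` {x \<in> topspace X. f x \<in> S}" using \<open>s \<in> S\<close> by blast
    qed
  qed blast
qed

section \<open>Grand orbits\<close>

definition grand_orbit :: "'a topology \<Rightarrow> ('a \<Rightarrow> 'a) \<Rightarrow> 'a set \<Rightarrow> 'a set" where
  "grand_orbit X T M = {x \<in> topspace X. \<exists>n m. (T ^^ n) x \<in> (T ^^ m) ` M}"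

lemma subset_grand_orbit: "M \<subseteq> topspace X \<Longrightarrow> M \<subseteq> grand_orbit X T M"
proof
  fix x assume "M \<subseteq> topspace X" "x \<in> M"
  then have "x \<in> topspace X" "(T ^^ 0) x \<in> (T ^^ 0) ` M" by auto
  then show "x \<in> grand_orbit X T M" unfolding grand_orbit_def by blast
qed

lemma grand_orbit_invariant:
  assumes "T ` topspace X \<subseteq> topspace X"
  shows "{x \<in> topspace X. T x \<in> grand_orbit X T M} = grand_orbit X T M"
proof (intro set_eqI iffI)
  fix x assume "x \<in> {x \<in> topspace X. T x \<in> grand_orbit X T M}"
  then obtain n m where "x \<in> topspace X" "(T ^^ n) (T x) \<in> (T ^^ m) ` M"
    unfolding grand_orbit_def by blast
  then have "x \<in> topspace X" "(T ^^ Suc n) x \<in> (T ^^ m) ` M"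
    by (simp_all add: funpow_Suc_right del: funpow.simps)
  then show "x \<in> grand_orbit X T M" unfolding grand_orbit_def by blast
next
  fix x assume "x \<in> grand_orbit X T M"
  then obtain n m where x: "x \<in> topspace X" "(T ^^ n) x \<in> (T ^^ m) ` M"
    unfolding grand_orbit_def by blast
  have "\<exists>n m. (T ^^ n) (T x) \<in> (T ^^ m) ` M"
  proof (cases n)
    case 0
    then have "(T ^^ 0) (T x) \<in> (T ^^ Suc m) ` M" using x(2) by auto
    then show ?thesis by blast
  next
    case (Suc k)
    then have "(T ^^ k) (T x) \<in> (T ^^ m) ` M"
      using x(2) by (simp add: funpow_Suc_right del: funpow.simps)
    then show ?thesis by blast
  qed
  moreover have "T x \<in> topspace X" using x(1) assms by blast
  ultimately show "x \<in> {x \<in> topspace X. T x \<in> grand_orbit X T M}"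
    using x(1) unfolding grand_orbit_def by blast
qed

lemma meagre_in_grand_orbit:
  assumes "T ` topspace X \<subseteq> topspace X"
    and image: "\<And>A. meagre_in X A \<Longrightarrow> meagre_in X (T ` A)"
    and preimage: "\<And>A. meagre_in X A \<Longrightarrow> meagre_in X {x \<in> topspace X. T x \<in> A}"
    and "meagre_in X M"
  shows "meagre_in X (grand_orbit X T M)"
proof -
  have images: "meagre_in X ((T ^^ m) ` M)" for m
  proof (induction m)
    case (Suc m)
    then have "meagre_in X (T ` (T ^^ m) ` M)" by (rule image)
    then show ?case by (simp add: image_comp)
  qed (simp add: assms(4))
  have preimages: "meagre_in X {x \<in> topspace X. (T ^^ n) x \<in> A}" if "meagre_in X A" for n A
  proof (induction n)
    case 0
    have "{x \<in> topspace X. (T ^^ 0) x \<in> A} = A" using meagre_in_subset_topspace[OF that] by auto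
    then show ?case using that by simp
  next
    case (Suc n)
    have "{x \<in> topspace X. (T ^^ Suc n) x \<in> A}
        = {x \<in> topspace X. T x \<in> {y \<in> topspace X. (T ^^ n) y \<in> A}}"
      using assms(1) by (auto simp: funpow_Suc_right simp del: funpow.simps)
    then show ?case using preimage[OF Suc.IH] by simp
  qed
  have "grand_orbit X T M = (\<Union>n. \<Union>m. {x \<in> topspace X. (T ^^ n) x \<in> (T ^^ m) ` M})"
    unfolding grand_orbit_def by blast
  also have "meagre_in X \<dots>"
    using preimages[OF images] by (intro meagre_in_UN) simp_all
  finally show ?thesis .
qed

lemma meagre_in_grand_orbit_locally_injective:
  assumes "second_countable X" "locally_compact_space X" "Hausdorff_space X"
    and "continuous_map X X T" "locally_injective X T" "quasi_open_map X X T" "meagre_in X M"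
  shows "meagre_in X (grand_orbit X T M)"
proof (rule meagre_in_grand_orbit)
  show "T ` topspace X \<subseteq> topspace X"
    using continuous_map_image_subset_topspace[OF assms(4)] .
  show "meagre_in X (T ` A)" if "meagre_in X A" for A
    using meagre_in_image[OF assms(1-3,3-5) that] .
  show "meagre_in X {x \<in> topspace X. T x \<in> A}" if "meagre_in X A" for A
    using meagre_in_preimage[OF assms(4,6) that] .
qed (rule assms(7))

lemma invariant_comeagre_bijective_set_exists:
  assumes "second_countable X" "locally_compact_space X" "Hausdorff_space X"
    and "second_countable X'" "Hausdorff_space X'"
    and "local_homeomorphism X' X' T'" "continuous_map X X T" "locally_injective X T"
    and "closed_map X' X \<pi>" "continuous_map X' X \<pi>" "\<pi> ` topspace X' = topspace X"
    and "\<And>x'. x' \<in> topspace X' \<Longrightarrow> \<pi> (T' x') = T (\<pi> x')"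
    and "X' closure_of injectivity_points X' \<pi> = topspace X'"
  shows "\<exists>S. S \<subseteq> topspace X \<and> {x \<in> topspace X. T x \<in> S} = S
              \<and> comeagre_in X S
              \<and> comeagre_in X' {x' \<in> topspace X'. \<pi> x' \<in> S}
              \<and> bij_betw \<pi> {x' \<in> topspace X'. \<pi> x' \<in> S} S"
proof -
  have T_top: "T ` topspace X \<subseteq> topspace X"
    using continuous_map_image_subset_topspace[OF assms(7)] .
  have \<pi>_quasi_open: "quasi_open_map X' X \<pi>"
    using closed_map_imp_quasi_open_map[OF assms(9,11,13)] .
  have T_quasi_open: "quasi_open_map X X T"
    using quasi_open_map_semiconjugate[OF assms(6) \<pi>_quasi_open assms(10-12)] .
  define B where "B = \<pi> ` (topspace X' - injectivity_points X' \<pi>)"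
  define G where "G = grand_orbit X T B"
  have "meagre_in X B"
    unfolding B_def using meagre_in_image_of_non_injectivity_points[OF assms(4,5,10,9,13)] .
  then have G_meagre: "meagre_in X G"
    unfolding G_def by (rule meagre_in_grand_orbit_locally_injective[OF assms(1-3,7,8) T_quasi_open])
  have G_top: "G \<subseteq> topspace X" unfolding G_def grand_orbit_def by blast
  have "B \<subseteq> topspace X" unfolding B_def using assms(11) by blast
  then have "B \<subseteq> G" unfolding G_def by (rule subset_grand_orbit)
  show ?thesis
  proof (intro exI conjI)
    show "topspace X - G \<subseteq> topspace X" by blast
    have "{x \<in> topspace X. T x \<in> G} = G"
      unfolding G_def by (rule grand_orbit_invariant[OF T_top])
    moreover have "\<forall>x\<in>topspace X. T x \<in> topspace X" using T_top by blast
    ultimately show "{x \<in> topspace X. T x \<in> topspace X - G} = topspace X - G" by blast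
    have "topspace X - (topspace X - G) = G" using G_top by blast
    then show "comeagre_in X (topspace X - G)" unfolding comeagre_in_def using G_meagre by simp
    have "topspace X' - {x' \<in> topspace X'. \<pi> x' \<in> topspace X - G} = {x' \<in> topspace X'. \<pi> x' \<in> G}"
      using assms(11) by blast
    then show "comeagre_in X' {x' \<in> topspace X'. \<pi> x' \<in> topspace X - G}"
      unfolding comeagre_in_def using meagre_in_preimage[OF assms(10) \<pi>_quasi_open G_meagre] by simp
    have "(topspace X - G) \<inter> \<pi> ` (topspace X' - injectivity_points X' \<pi>) = {}"
      using \<open>B \<subseteq> G\<close> unfolding B_def by blast
    then show "bij_betw \<pi> {x' \<in> topspace X'. \<pi> x' \<in> topspace X - G} (topspace X - G)"
      by (intro bij_betw_preimage_if_disjoint_non_injectivity[OF assms(11)]) auto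
  qed
qed

theorem corollary4p13:
  fixes X :: "'a topology" and X' :: "'b topology"
    and T :: "'a \<Rightarrow> 'a" and T' :: "'b \<Rightarrow> 'b" and \<pi> :: "'b \<Rightarrow> 'a"
  assumes "second_countable X" "locally_compact_space X" "Hausdorff_space X"
    and "second_countable X'" "locally_compact_space X'" "Hausdorff_space X'"
    and "local_homeomorphism X' X' T'"
    and "continuous_map X X T" "locally_injective X T"
    and "proper_map X' X \<pi>" "continuous_map X' X \<pi>" "\<pi> ` topspace X' = topspace X"
    and "\<And>x'. x' \<in> topspace X' \<Longrightarrow> \<pi> (T' x') = T (\<pi> x')"
  shows "(\<exists>S. S \<subseteq> topspace X \<and> {x \<in> topspace X. T x \<in> S} = S
              \<and> comeagre_in X S
              \<and> comeagre_in X' {x' \<in> topspace X'. \<pi> x' \<in> S}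
              \<and> bij_betw \<pi> {x' \<in> topspace X'. \<pi> x' \<in> S} S)
     \<longleftrightarrow> X' closure_of {x' \<in> topspace X'. card {y' \<in> topspace X'. \<pi> y' = \<pi> x'} = 1}
           = topspace X'" (is "?invariant_set_exists \<longleftrightarrow> _")
  unfolding injectivity_points_eq_card_fibre[symmetric]
proof
  assume ?invariant_set_exists
  then obtain S where "comeagre_in X' {x' \<in> topspace X'. \<pi> x' \<in> S}"
      "inj_on \<pi> {x' \<in> topspace X'. \<pi> x' \<in> S}"
    using bij_betw_imp_inj_on by blast
  then show "X' closure_of injectivity_points X' \<pi> = topspace X'"
    by (rule dense_injectivity_points_if_comeagre_inj_on[OF assms(5,6)])
next
  assume "X' closure_of injectivity_points X' \<pi> = topspace X'"
  with proper_imp_closed_map[OF assms(10)] show ?invariant_set_exists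
    using invariant_comeagre_bijective_set_exists[OF assms(1-4,6-9)] assms(11-13) by blast
qed

end
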